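(* Let $H$ be a monoid and $X,Y\in\mathcal{P}_{\mathrm{fin},1}(H)$. Then: (i) if $X$ divides $Y$ in $\mathcal{P}_{\mathrm{fin},1}(H)$, then $X\subseteq Y$; (ii) $\mathcal{P}_{\mathrm{fin},1}(H)$ is reduced and Dedekind-finite; (iii) $X$ and $Y$ are associated in $\mathcal{P}_{\mathrm{fin},1}(H)$ if and only if $X=Y$; (iv) $X$ is irreducible in $\mathcal{P}_{\mathrm{fin},1}(H)$ if and only if $X\neq\{1_H\}$ and $X\neq YZ$ for all $Y,Z\in\mathcal{P}_{\mathrm{fin},1}(H)$ with $Y\subsetneq X$ and $Z\subsetneq X$; (v) $X$ is irreducible in $\mathcal{P}_{\mathrm{fin},1}(H)$ if and only if it is a quark; (vi) if $X$ is irreducible in $\mathcal{P}_{\mathrm{fin},1}(H)$ but not an atom, then $X^2=X$.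
   Context: For a monoid $H$, $\mathcal{P}_{\mathrm{fin},1}(H)$ denotes the set of all non-empty finite subsets of $H$ containing $1_H$, a monoid under $XY=\{xy:x\in X,y\in Y\}$ with identity $\{1_H\}$. In a monoid $M$: $x\mid_M y$ iff $y\in MxM=\{uxv:u,v\in M\}$; $x,y$ are associated if each divides the other; $x$ properly divides $y$ if $x\mid_M y$ and $y\nmid_M x$. A unit-divisor is an element dividing $1_M$; other elements are non-unit-divisors. An irreducible is a non-unit-divisor $a$ such that $a\neq xy$ for all non-unit-divisors $x,y$ properly dividing $a$. An atom is a non-unit-divisor that is not a product of two non-unit-divisors. A quark is a non-unit-divisor that is not properly divided by any non-unit-divisor. $M$ is reduced if its only unit is $1_M$, and Dedekind-finite if $xy=1_M$ implies $yx=1_M$. *)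

theory Defs
  imports Main
begin

definition Pf1 :: "'a::monoid_mult set set" where
  "Pf1 = {X. finite X \<and> X \<noteq> {} \<and> 1 \<in> X}"

definition smul :: "'a::times set \<Rightarrow> 'a set \<Rightarrow> 'a set" where
  "smul X Y = {x * y | x y. x \<in> X \<and> y \<in> Y}"

text \<open>Generic notions for a monoid given by carrier M, operation f and identity e.\<close>

definition mdvd :: "'m set \<Rightarrow> ('m \<Rightarrow> 'm \<Rightarrow> 'm) \<Rightarrow> 'm \<Rightarrow> 'm \<Rightarrow> bool" where
  "mdvd M f x y \<longleftrightarrow> (\<exists>u\<in>M. \<exists>v\<in>M. y = f (f u x) v)"

definition massoc :: "'m set \<Rightarrow> ('m \<Rightarrow> 'm \<Rightarrow> 'm) \<Rightarrow> 'm \<Rightarrow> 'm \<Rightarrow> bool" where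
  "massoc M f x y \<longleftrightarrow> mdvd M f x y \<and> mdvd M f y x"

definition mpdvd :: "'m set \<Rightarrow> ('m \<Rightarrow> 'm \<Rightarrow> 'm) \<Rightarrow> 'm \<Rightarrow> 'm \<Rightarrow> bool" where
  "mpdvd M f x y \<longleftrightarrow> mdvd M f x y \<and> \<not> mdvd M f y x"

definition munit_divisor :: "'m set \<Rightarrow> ('m \<Rightarrow> 'm \<Rightarrow> 'm) \<Rightarrow> 'm \<Rightarrow> 'm \<Rightarrow> bool" where
  "munit_divisor M f e x \<longleftrightarrow> mdvd M f x e"

definition mirreducible :: "'m set \<Rightarrow> ('m \<Rightarrow> 'm \<Rightarrow> 'm) \<Rightarrow> 'm \<Rightarrow> 'm \<Rightarrow> bool" where
  "mirreducible M f e a \<longleftrightarrow> a \<in> M \<and> \<not> munit_divisor M f e a \<and>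
     (\<forall>x\<in>M. \<forall>y\<in>M. \<not> munit_divisor M f e x \<and> \<not> munit_divisor M f e y \<and>
        mpdvd M f x a \<and> mpdvd M f y a \<longrightarrow> a \<noteq> f x y)"

definition matom :: "'m set \<Rightarrow> ('m \<Rightarrow> 'm \<Rightarrow> 'm) \<Rightarrow> 'm \<Rightarrow> 'm \<Rightarrow> bool" where
  "matom M f e a \<longleftrightarrow> a \<in> M \<and> \<not> munit_divisor M f e a \<and>
     (\<forall>x\<in>M. \<forall>y\<in>M. \<not> munit_divisor M f e x \<and> \<not> munit_divisor M f e y \<longrightarrow> a \<noteq> f x y)"

definition mquark :: "'m set \<Rightarrow> ('m \<Rightarrow> 'm \<Rightarrow> 'm) \<Rightarrow> 'm \<Rightarrow> 'm \<Rightarrow> bool" where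
  "mquark M f e a \<longleftrightarrow> a \<in> M \<and> \<not> munit_divisor M f e a \<and>
     (\<forall>x\<in>M. \<not> munit_divisor M f e x \<longrightarrow> \<not> mpdvd M f x a)"

definition munit :: "'m set \<Rightarrow> ('m \<Rightarrow> 'm \<Rightarrow> 'm) \<Rightarrow> 'm \<Rightarrow> 'm \<Rightarrow> bool" where
  "munit M f e u \<longleftrightarrow> u \<in> M \<and> (\<exists>v\<in>M. f u v = e \<and> f v u = e)"

definition mreduced :: "'m set \<Rightarrow> ('m \<Rightarrow> 'm \<Rightarrow> 'm) \<Rightarrow> 'm \<Rightarrow> bool" where
  "mreduced M f e \<longleftrightarrow> (\<forall>u. munit M f e u \<longrightarrow> u = e)"

definition mdedekind_finite :: "'m set \<Rightarrow> ('m \<Rightarrow> 'm \<Rightarrow> 'm) \<Rightarrow> 'm \<Rightarrow> bool" where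
  "mdedekind_finite M f e \<longleftrightarrow> (\<forall>x\<in>M. \<forall>y\<in>M. f x y = e \<longrightarrow> f y x = e)"

end

theory Submission
  imports Defs
begin

text \<open>Every member of \<open>Pf1\<close> contains 1, so \<open>X \<union> Y \<subseteq> XY\<close>: a divisor is a subset,
  the only unit-divisor is \<open>{1}\<close>, and irreducibility of \<open>X\<close> says that a factorisation
  \<open>X = YZ\<close> (whose factors automatically lie inside \<open>X\<close>) has \<open>Y = X\<close> or \<open>Z = X\<close>.
  The key observation is an absorption property: if \<open>X = XB\<close> and \<open>b \<in> B - {1}\<close>, then
  \<open>Xb \<subseteq> X\<close>, whence \<open>X = (X - {b}){1, b}\<close>; for irreducible \<open>X\<close> this forces \<open>B = X\<close>.
  Applied to a factorisation \<open>X = UYV\<close> it shows that no \<open>Y \<noteq> {1}\<close> properly divides an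
  irreducible \<open>X\<close>, and applied to \<open>X = YZ\<close> with non-trivial factors it gives \<open>XX = X\<close>.\<close>

lemma Pf1_iff: "X \<in> Pf1 \<longleftrightarrow> finite X \<and> 1 \<in> X"
  unfolding Pf1_def by auto

lemma one_in_Pf1: "X \<in> Pf1 \<Longrightarrow> 1 \<in> X"
  unfolding Pf1_def by simp

lemma singleton_one_in_Pf1: "{1} \<in> Pf1"
  unfolding Pf1_def by simp

lemma smul_in_Pf1: "X \<in> Pf1 \<Longrightarrow> Y \<in> Pf1 \<Longrightarrow> smul X Y \<in> Pf1"
proof -
  assume "X \<in> Pf1" "Y \<in> Pf1"
  moreover have "smul X Y = (\<lambda>(x, y). x * y) ` (X \<times> Y)"
    unfolding smul_def by auto
  ultimately show ?thesis
    unfolding Pf1_iff by (auto intro!: image_eqI[where x = "(1, 1)"])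
qed

lemma smul_one_left [simp]: "smul {1} X = (X::'a::monoid_mult set)"
  unfolding smul_def by auto

lemma smul_one_right [simp]: "smul X {1} = (X::'a::monoid_mult set)"
  unfolding smul_def by auto

lemma subset_smul_left: "1 \<in> (Y::'a::monoid_mult set) \<Longrightarrow> X \<subseteq> smul X Y"
  unfolding smul_def by force

lemma subset_smul_right: "1 \<in> (X::'a::monoid_mult set) \<Longrightarrow> Y \<subseteq> smul X Y"
  unfolding smul_def by force

lemma smul_eq_one_iff:
  assumes "A \<in> Pf1" "B \<in> Pf1"
  shows "smul A B = {1::'a::monoid_mult} \<longleftrightarrow> A = {1} \<and> B = {1}"
proof
  assume AB: "smul A B = {1}"
  have "A \<subseteq> {1}" "B \<subseteq> {1}"
    using subset_smul_left[of B A] subset_smul_right[of A B] AB assms one_in_Pf1 by auto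
  then show "A = {1} \<and> B = {1}"
    using assms one_in_Pf1 by blast
qed simp

lemma mdvd_Pf1_imp_subset: "mdvd Pf1 smul X Y \<Longrightarrow> X \<subseteq> (Y::'a::monoid_mult set)"
proof -
  assume "mdvd Pf1 smul X Y"
  then obtain U V where U: "U \<in> Pf1" and V: "V \<in> Pf1" and Y: "Y = smul (smul U X) V"
    unfolding mdvd_def by blast
  have "X \<subseteq> smul U X"
    using subset_smul_right[OF one_in_Pf1[OF U]] .
  also have "\<dots> \<subseteq> Y"
    using subset_smul_left[OF one_in_Pf1[OF V]] Y by simp
  finally show ?thesis .
qed

lemma mpdvd_Pf1_imp_psubset: "mpdvd Pf1 smul X Y \<Longrightarrow> X \<subset> (Y::'a::monoid_mult set)"
  unfolding mpdvd_def using mdvd_Pf1_imp_subset[of X Y] mdvd_Pf1_imp_subset[of Y X] by blast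

lemma mdvd_Pf1_smul_left:
  "Z \<in> Pf1 \<Longrightarrow> mdvd Pf1 smul Y (smul Y (Z::'a::monoid_mult set))"
  unfolding mdvd_def
  by (intro bexI[where x = "{1}"] bexI[where x = Z]) (simp_all add: singleton_one_in_Pf1)

lemma mdvd_Pf1_smul_right:
  "Y \<in> Pf1 \<Longrightarrow> mdvd Pf1 smul Z (smul Y (Z::'a::monoid_mult set))"
  unfolding mdvd_def
  by (intro bexI[where x = Y] bexI[where x = "{1}"]) (simp_all add: singleton_one_in_Pf1)

lemma mdvd_Pf1_refl: "X \<in> Pf1 \<Longrightarrow> mdvd Pf1 smul X (X::'a::monoid_mult set)"
  using mdvd_Pf1_smul_left[OF singleton_one_in_Pf1, of X] by simp

lemma massoc_Pf1_iff: "X \<in> Pf1 \<Longrightarrow> massoc Pf1 smul X Y \<longleftrightarrow> X = (Y::'a::monoid_mult set)"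
  unfolding massoc_def using mdvd_Pf1_imp_subset mdvd_Pf1_refl by blast

lemma munit_divisor_Pf1_iff:
  "X \<in> Pf1 \<Longrightarrow> munit_divisor Pf1 smul {1} X \<longleftrightarrow> X = {1::'a::monoid_mult}"
  unfolding munit_divisor_def
  using mdvd_Pf1_imp_subset[of X "{1}"] one_in_Pf1 mdvd_Pf1_refl[OF singleton_one_in_Pf1]
  by blast

lemma mreduced_Pf1: "mreduced Pf1 smul {1::'a::monoid_mult}"
  unfolding mreduced_def munit_def using smul_eq_one_iff by blast

lemma mdedekind_finite_Pf1: "mdedekind_finite Pf1 smul {1::'a::monoid_mult}"
  unfolding mdedekind_finite_def using smul_eq_one_iff by fastforce

lemma mquark_imp_mirreducible: "mquark M f e a \<Longrightarrow> mirreducible M f e a"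
  unfolding mquark_def mirreducible_def by blast

definition subset_irreducible :: "'a::monoid_mult set \<Rightarrow> bool" where
  "subset_irreducible X \<longleftrightarrow>
     X \<noteq> {1} \<and> (\<forall>Y\<in>Pf1. \<forall>Z\<in>Pf1. Y \<subset> X \<and> Z \<subset> X \<longrightarrow> X \<noteq> smul Y Z)"

lemma subset_irreducible_not_munit_divisor:
  "subset_irreducible X \<Longrightarrow> X \<in> Pf1 \<Longrightarrow> \<not> munit_divisor Pf1 smul {1} X"
  using munit_divisor_Pf1_iff unfolding subset_irreducible_def by blast

lemma subset_irreducible_psubset_factors:
  assumes "subset_irreducible X" "Y \<in> Pf1" "Z \<in> Pf1" "Y \<subset> X" "Z \<subset> X"
  shows "smul Y Z \<noteq> X"
proof
  assume "smul Y Z = X"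
  moreover have "X \<noteq> smul Y Z"
    using assms unfolding subset_irreducible_def by blast
  ultimately show False by simp
qed

lemma mirreducible_Pf1_iff:
  assumes X: "X \<in> Pf1"
  shows "mirreducible Pf1 smul {1} X \<longleftrightarrow> subset_irreducible (X::'a::monoid_mult set)"
proof
  assume irr: "mirreducible Pf1 smul {1} X"
  show "subset_irreducible X"
    unfolding subset_irreducible_def
  proof (intro conjI ballI impI notI)
    show "X = {1} \<Longrightarrow> False"
      using irr munit_divisor_Pf1_iff[OF X] unfolding mirreducible_def by blast
  next
    fix Y Z assume Y: "Y \<in> Pf1" and Z: "Z \<in> Pf1" and YZ: "Y \<subset> X \<and> Z \<subset> X"
      and X_eq: "X = smul Y Z"
    then have "Y \<noteq> {1}" "Z \<noteq> {1}" by auto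
    then have "\<not> munit_divisor Pf1 smul {1} Y" "\<not> munit_divisor Pf1 smul {1} Z"
      using munit_divisor_Pf1_iff Y Z by blast+
    moreover have "mpdvd Pf1 smul Y X" "mpdvd Pf1 smul Z X"
      using mdvd_Pf1_smul_left[OF Z, of Y] mdvd_Pf1_smul_right[OF Y, of Z]
        mdvd_Pf1_imp_subset[of X Y] mdvd_Pf1_imp_subset[of X Z] YZ X_eq
      unfolding mpdvd_def by auto
    ultimately show False
      using irr Y Z X_eq unfolding mirreducible_def by blast
  qed
next
  assume irr: "subset_irreducible X"
  show "mirreducible Pf1 smul {1} X"
    unfolding mirreducible_def
  proof (intro conjI ballI impI notI)
    show "X \<in> Pf1" by (fact X)
    show "munit_divisor Pf1 smul {1} X \<Longrightarrow> False"
      using subset_irreducible_not_munit_divisor[OF irr X] by blast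
  next
    fix Y Z assume Y: "Y \<in> Pf1" and Z: "Z \<in> Pf1" and
      "\<not> munit_divisor Pf1 smul {1} Y \<and> \<not> munit_divisor Pf1 smul {1} Z \<and>
        mpdvd Pf1 smul Y X \<and> mpdvd Pf1 smul Z X" and "X = smul Y Z"
    then show False
      using subset_irreducible_psubset_factors[OF irr Y Z] mpdvd_Pf1_imp_psubset by metis
  qed
qed

lemma subset_irreducible_factor:
  assumes "subset_irreducible X" "A \<in> Pf1" "B \<in> Pf1" "X = smul A B"
  shows "A = X \<or> B = X"
proof -
  have "A \<subseteq> X" "B \<subseteq> X"
    using assms(4) subset_smul_left[OF one_in_Pf1[OF assms(3)], of A]
      subset_smul_right[OF one_in_Pf1[OF assms(2)], of B] by simp_all
  then show ?thesis
    using subset_irreducible_psubset_factors[OF assms(1-3)] assms(4) by auto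
qed

lemma smul_remove_right:
  assumes "1 \<in> X" "b \<in> X" "b \<noteq> 1" "\<forall>x\<in>X. x * b \<in> X"
  shows "smul (X - {b}) {1, b} = (X::'a::monoid_mult set)"
proof
  show "smul (X - {b}) {1, b} \<subseteq> X"
    using assms(4) unfolding smul_def by auto
  show "X \<subseteq> smul (X - {b}) {1, b}"
  proof
    fix x assume "x \<in> X"
    then have "x = x * 1 \<and> x \<in> X - {b} \<or> x = 1 * b \<and> 1 \<in> X - {b}"
      using assms by auto
    then show "x \<in> smul (X - {b}) {1, b}"
      unfolding smul_def by blast
  qed
qed

lemma smul_remove_left:
  assumes "1 \<in> X" "b \<in> X" "b \<noteq> 1" "\<forall>x\<in>X. b * x \<in> X"
  shows "smul {1, b} (X - {b}) = (X::'a::monoid_mult set)"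
proof
  show "smul {1, b} (X - {b}) \<subseteq> X"
    using assms(4) unfolding smul_def by auto
  show "X \<subseteq> smul {1, b} (X - {b})"
  proof
    fix x assume "x \<in> X"
    then have "x = 1 * x \<and> x \<in> X - {b} \<or> x = b * 1 \<and> 1 \<in> X - {b}"
      using assms by auto
    then show "x \<in> smul {1, b} (X - {b})"
      unfolding smul_def by blast
  qed
qed

lemma subset_irreducible_absorb_right:
  assumes irr: "subset_irreducible X" and X: "X \<in> Pf1" and B: "B \<in> Pf1"
    and absorb: "smul X B = X"
  shows "B = {1} \<or> B = X"
proof (rule ccontr)
  assume contra: "\<not> (B = {1} \<or> B = X)"
  have "B \<subseteq> X"
    using subset_smul_right[OF one_in_Pf1[OF X], of B] absorb by simp
  with contra have BX: "B \<subset> X" by blast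
  obtain b where b: "b \<in> B" "b \<noteq> 1"
    using contra one_in_Pf1[OF B] by blast
  have "x * b \<in> X" if "x \<in> X" for x
  proof -
    have "x * b \<in> smul X B" using that b(1) unfolding smul_def by blast
    then show ?thesis using absorb by simp
  qed
  then have "smul (X - {b}) {1, b} = X"
    using smul_remove_right[OF one_in_Pf1[OF X]] b BX by blast
  moreover have "X - {b} \<in> Pf1" "{1, b} \<in> Pf1"
    using X b(2) unfolding Pf1_iff by auto
  moreover have "X - {b} \<subset> X" "{1, b} \<subset> X"
    using b BX one_in_Pf1[OF B] by blast+
  ultimately show False
    using subset_irreducible_psubset_factors[OF irr] by blast
qed

lemma subset_irreducible_absorb_left:
  assumes irr: "subset_irreducible X" and X: "X \<in> Pf1" and B: "B \<in> Pf1"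
    and absorb: "smul B X = X"
  shows "B = {1} \<or> B = X"
proof (rule ccontr)
  assume contra: "\<not> (B = {1} \<or> B = X)"
  have "B \<subseteq> X"
    using subset_smul_left[OF one_in_Pf1[OF X], of B] absorb by simp
  with contra have BX: "B \<subset> X" by blast
  obtain b where b: "b \<in> B" "b \<noteq> 1"
    using contra one_in_Pf1[OF B] by blast
  have "b * x \<in> X" if "x \<in> X" for x
  proof -
    have "b * x \<in> smul B X" using that b(1) unfolding smul_def by blast
    then show ?thesis using absorb by simp
  qed
  then have "smul {1, b} (X - {b}) = X"
    using smul_remove_left[OF one_in_Pf1[OF X]] b BX by blast
  moreover have "X - {b} \<in> Pf1" "{1, b} \<in> Pf1"
    using X b(2) unfolding Pf1_iff by auto
  moreover have "X - {b} \<subset> X" "{1, b} \<subset> X"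
    using b BX one_in_Pf1[OF B] by blast+
  ultimately show False
    using subset_irreducible_psubset_factors[OF irr] by blast
qed

lemma subset_irreducible_imp_mquark:
  assumes irr: "subset_irreducible X" and X: "X \<in> Pf1"
  shows "mquark Pf1 smul {1} X"
  unfolding mquark_def
proof (intro conjI ballI impI notI)
  show "X \<in> Pf1" by (fact X)
  show "munit_divisor Pf1 smul {1} X \<Longrightarrow> False"
    using subset_irreducible_not_munit_divisor[OF irr X] by blast
next
  fix Y assume Y: "Y \<in> Pf1" and "\<not> munit_divisor Pf1 smul {1} Y" "mpdvd Pf1 smul Y X"
  then have Y1: "Y \<noteq> {1}" and YX: "Y \<subset> X"
    using munit_divisor_Pf1_iff[OF Y] mpdvd_Pf1_imp_psubset by auto
  obtain U V where U: "U \<in> Pf1" and V: "V \<in> Pf1" and X_eq: "X = smul (smul U Y) V"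
    using \<open>mpdvd Pf1 smul Y X\<close> unfolding mpdvd_def mdvd_def by blast
  have UY: "smul U Y \<in> Pf1" "smul U Y \<noteq> {1}"
    using smul_in_Pf1[OF U Y] smul_eq_one_iff[OF U Y] Y1 by auto
  have "smul U Y = X"
  proof (cases "V = X")
    case True
    then show ?thesis
      using subset_irreducible_absorb_left[OF irr X UY(1)] X_eq UY(2) by argo
  next
    case False
    then show ?thesis
      using subset_irreducible_factor[OF irr UY(1) V X_eq] by argo
  qed
  then have "smul X Y = X"
    using subset_irreducible_factor[OF irr U Y] YX by auto
  then show False
    using subset_irreducible_absorb_right[OF irr X Y] Y1 YX by auto
qed

lemma subset_irreducible_not_matom_idem:
  assumes irr: "subset_irreducible X" and X: "X \<in> Pf1" and "\<not> matom Pf1 smul {1} X"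
  shows "smul X X = X"
proof -
  note subset_irreducible_not_munit_divisor[OF irr X]
  then obtain Y Z where Y: "Y \<in> Pf1" "\<not> munit_divisor Pf1 smul {1} Y"
    and Z: "Z \<in> Pf1" "\<not> munit_divisor Pf1 smul {1} Z" and X_eq: "X = smul Y Z"
    using assms(3) X unfolding matom_def by blast
  have Y1: "Y \<noteq> {1}" and Z1: "Z \<noteq> {1}"
    using munit_divisor_Pf1_iff[OF Y(1)] munit_divisor_Pf1_iff[OF Z(1)] Y(2) Z(2) by auto
  from subset_irreducible_factor[OF irr Y(1) Z(1) X_eq] show ?thesis
  proof
    assume "Y = X"
    then have "Z = X"
      using subset_irreducible_absorb_right[OF irr X Z(1)] X_eq Z1 by argo
    then show ?thesis using X_eq \<open>Y = X\<close> by argo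
  next
    assume "Z = X"
    then have "Y = X"
      using subset_irreducible_absorb_left[OF irr X Y(1)] X_eq Y1 by argo
    then show ?thesis using X_eq \<open>Z = X\<close> by argo
  qed
qed

theorem lemma2p2:
  fixes X Y :: "'a::monoid_mult set"
  assumes "X \<in> Pf1" and "Y \<in> Pf1"
  shows "(mdvd Pf1 smul X Y \<longrightarrow> X \<subseteq> Y)
    \<and> (mreduced Pf1 smul {1} \<and> mdedekind_finite Pf1 smul {1})
    \<and> (massoc Pf1 smul X Y \<longleftrightarrow> X = Y)
    \<and> (mirreducible Pf1 smul {1} X \<longleftrightarrow>
         X \<noteq> {1} \<and> (\<forall>Y'\<in>Pf1. \<forall>Z\<in>Pf1. Y' \<subset> X \<and> Z \<subset> X \<longrightarrow> X \<noteq> smul Y' Z))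
    \<and> (mirreducible Pf1 smul {1} X \<longleftrightarrow> mquark Pf1 smul {1} X)
    \<and> (mirreducible Pf1 smul {1} X \<and> \<not> matom Pf1 smul {1} X \<longrightarrow> smul X X = X)"
proof -
  note irr_iff = mirreducible_Pf1_iff[OF assms(1)]
  have quark: "mirreducible Pf1 smul {1} X \<longleftrightarrow> mquark Pf1 smul {1} X"
    using irr_iff subset_irreducible_imp_mquark[OF _ assms(1)]
      mquark_imp_mirreducible[of Pf1 smul "{1}" X] by blast
  have idem: "mirreducible Pf1 smul {1} X \<and> \<not> matom Pf1 smul {1} X \<longrightarrow> smul X X = X"
    using irr_iff subset_irreducible_not_matom_idem[OF _ assms(1)] by blast
  show ?thesis
    using mdvd_Pf1_imp_subset[of X Y] massoc_Pf1_iff[OF assms(1), of Y]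
      mreduced_Pf1 mdedekind_finite_Pf1 irr_iff[unfolded subset_irreducible_def] quark idem
    by (intro conjI) simp_all
qed

end
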